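(* Let $\nu_0$ be a function on $\mathbb{Z}^d$ (initial mass configuration). If $T_1:[0,\tau_1]\to\mathbb{Z}^d$ and $T_2:[0,\tau_2]\to\mathbb{Z}^d$ are complete legal toppling functions for $\nu_0$, then $\mathcal{L}(T_1^{-1}(x))=\mathcal{L}(T_2^{-1}(x))$ for every $x\in\mathbb{Z}^d$. In particular $\tau_1=\tau_2$ and the final configurations $\nu_{\tau_1}$ (for $T_1$) and $\nu_{\tau_2}$ (for $T_2$) coincide.
   Context: $\mathcal{L}$ is Lebesgue measure on $\mathbb{R}$. The discrete Laplacian is $\Delta f(x)=\frac{1}{2d}\sum_{y\sim x}f(y)-f(x)$. A toppling function is a map $T:[0,\tau]\to\mathbb{Z}^d$ ($\tau>0$) with only finitely many discontinuities in $[0,t]$ for every $t<\tau$; $T(t)$ is the site toppled at time $t$. Its odometer at time $t$ is $u_t(x)=\mathcal{L}(T^{-1}(x)\cap[0,t])$ and the mass at time $t$ is $\nu_t=\nu_0+\Delta u_t$. $T$ is legal for $\nu_0$ if $\nu_t(T(t))\ge1$ for all $0\le t\le\tau$, and complete if moreover $\nu_\tau\le1$ everywhere. *)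

theory Defs
  imports "HOL-Analysis.Analysis"
begin

text \<open>Sites of Z^d are vectors of integers indexed by a finite type 'd (d = CARD('d)).\<close>

definition nbr :: "int ^ 'd::finite \<Rightarrow> int ^ 'd \<Rightarrow> bool" where
  "nbr x y \<longleftrightarrow> (\<Sum>i\<in>UNIV. \<bar>x $ i - y $ i\<bar>) = 1"

definition dlaplacian :: "(int ^ 'd::finite \<Rightarrow> real) \<Rightarrow> int ^ 'd \<Rightarrow> real" where
  "dlaplacian f x = (1 / (2 * real CARD('d))) * (\<Sum>y\<in>{y. nbr x y}. f y) - f x"

text \<open>T is discontinuous at s (relative to [0,tau]) iff it is not locally constant there
  (the codomain Z^d being discrete).\<close>
definition discont_at :: "(real \<Rightarrow> int ^ 'd::finite) \<Rightarrow> real \<Rightarrow> real \<Rightarrow> bool" where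
  "discont_at T tau s \<longleftrightarrow>
     \<not> (\<exists>e>0. \<forall>r\<in>{0..tau}. \<bar>r - s\<bar> < e \<longrightarrow> T r = T s)"

definition toppling_function :: "(real \<Rightarrow> int ^ 'd::finite) \<Rightarrow> real \<Rightarrow> bool" where
  "toppling_function T tau \<longleftrightarrow> tau > 0 \<and>
     (\<forall>t. 0 \<le> t \<and> t < tau \<longrightarrow> finite {s\<in>{0..t}. discont_at T tau s})"

definition odometer :: "(real \<Rightarrow> int ^ 'd::finite) \<Rightarrow> real \<Rightarrow> real \<Rightarrow> int ^ 'd \<Rightarrow> real" where
  "odometer T tau t x = measure lebesgue {s\<in>{0..tau}. T s = x \<and> s \<le> t}"

definition mass :: "(int ^ 'd::finite \<Rightarrow> real) \<Rightarrow> (real \<Rightarrow> int ^ 'd) \<Rightarrow> real \<Rightarrow> real \<Rightarrow> int ^ 'd \<Rightarrow> real" where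
  "mass nu0 T tau t x = nu0 x + dlaplacian (odometer T tau t) x"

definition legal :: "(int ^ 'd::finite \<Rightarrow> real) \<Rightarrow> (real \<Rightarrow> int ^ 'd) \<Rightarrow> real \<Rightarrow> bool" where
  "legal nu0 T tau \<longleftrightarrow> (\<forall>t\<in>{0..tau}. mass nu0 T tau t (T t) \<ge> 1)"

definition complete_toppling :: "(int ^ 'd::finite \<Rightarrow> real) \<Rightarrow> (real \<Rightarrow> int ^ 'd) \<Rightarrow> real \<Rightarrow> bool" where
  "complete_toppling nu0 T tau \<longleftrightarrow> legal nu0 T tau \<and> (\<forall>x. mass nu0 T tau tau x \<le> 1)"

end

theory Submission
  imports Defs
begin

(* The proof compares the final odometers of the two complete legal topplings.
   1. Level sets of a toppling function are Lebesgue measurable: off the countable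
      set of discontinuities they are relatively open in [0,tau].  Hence the
      odometer is a genuine measure, it is 1-Lipschitz in time, and the level-set
      measures add up to tau.
   2. Least action: if T is legal for nu0 and U >= 0 satisfies nu0 + Delta U <= 1,
      then the final odometer of T is bounded by U.  Otherwise look at the first
      time t0 at which the odometer exceeds U somewhere.  By the Lipschitz bound
      the odometer is still below U at t0; just after t0 only one site y topples,
      so at a time e slightly later the odometer exceeds U exactly at y, and a
      comparison of Laplacians shows that the mass at y is < 1, contradicting
      legality.
   3. The final odometer of a complete toppling is such a U, so the two final
      odometers dominate each other; equality of odometers gives the equality of
      the level-set measures, of the total times and of the final masses. *)

lemma sets_lebesgue_relatively_open_off_countable:
  fixes A L N :: "'a::euclidean_space set"
  assumes A: "A \<in> sets lebesgue" and LA: "L \<subseteq> A" and N: "countable N"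
    and nbhd: "\<And>r. r \<in> L - N \<Longrightarrow> \<exists>e>0. A \<inter> ball r e \<subseteq> L"
  shows "L \<in> sets lebesgue"
proof -
  define U where "U = \<Union>{ball r e | r e. e > 0 \<and> A \<inter> ball r e \<subseteq> L}"
  have "open U" unfolding U_def by auto
  have "L = (A \<inter> U) \<union> (L \<inter> N)"
  proof (intro equalityI subsetI)
    fix r assume r: "r \<in> L"
    show "r \<in> (A \<inter> U) \<union> (L \<inter> N)"
    proof (cases "r \<in> N")
      case False
      then obtain e where "e > 0" "A \<inter> ball r e \<subseteq> L" using nbhd r by blast
      then have "r \<in> U" unfolding U_def by (auto intro!: exI[of _ "ball r e"])
      then show ?thesis using r LA by blast
    qed (use r in blast)
  next
    fix r assume "r \<in> (A \<inter> U) \<union> (L \<inter> N)"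
    then show "r \<in> L" unfolding U_def by blast
  qed
  moreover have "L \<inter> N \<in> null_sets lebesgue"
    using countable_subset[OF _ N, of "L \<inter> N"]
    by (intro null_sets_completionI countable_imp_null_set_lborel) auto
  moreover have "A \<inter> U \<in> sets lebesgue" using A \<open>open U\<close> by (intro sets.Int) (auto intro: borel_open)
  ultimately show ?thesis by (metis null_setsD2 sets.Un)
qed

text \<open>A toppling function has only countably many discontinuities: those before any
  rational time q < tau are finitely many.\<close>
lemma countable_discontinuities:
  assumes "toppling_function T tau"
  shows "countable {s\<in>{0..tau}. discont_at T tau s}"
proof -
  define Q where "Q = {q\<in>\<rat>. 0 \<le> q \<and> q < tau}"
  have "countable Q" unfolding Q_def by (rule countable_subset[OF _ countable_rat]) auto
  have "{s\<in>{0..tau}. discont_at T tau s} \<subseteq> insert tau (\<Union>q\<in>Q. {s\<in>{0..q}. discont_at T tau s})"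
  proof
    fix s assume s: "s \<in> {s\<in>{0..tau}. discont_at T tau s}"
    show "s \<in> insert tau (\<Union>q\<in>Q. {s\<in>{0..q}. discont_at T tau s})"
    proof (cases "s = tau")
      case False
      then obtain q where "q \<in> \<rat>" "s < q" "q < tau" using s Rats_dense_in_real[of s tau] by auto
      then show ?thesis using s by (auto simp: Q_def)
    qed simp
  qed
  moreover have "finite {s\<in>{0..q}. discont_at T tau s}" if "q \<in> Q" for q
    using assms that by (auto simp: toppling_function_def Q_def)
  ultimately show ?thesis
    using \<open>countable Q\<close> by (meson countable_UN countable_finite countable_insert countable_subset)
qed

lemma level_set_measurable:
  assumes "toppling_function T tau"
  shows "{s\<in>{0..tau}. T s = x} \<in> sets lebesgue"
proof (rule sets_lebesgue_relatively_open_off_countable)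
  show "countable {s\<in>{0..tau}. discont_at T tau s}"
    using countable_discontinuities[OF assms] .
  fix r assume r: "r \<in> {s\<in>{0..tau}. T s = x} - {s\<in>{0..tau}. discont_at T tau s}"
  then obtain e where "e > 0" "\<forall>s\<in>{0..tau}. \<bar>s - r\<bar> < e \<longrightarrow> T s = T r"
    by (auto simp: discont_at_def)
  then show "\<exists>e>0. {0..tau} \<inter> ball r e \<subseteq> {s\<in>{0..tau}. T s = x}"
    using r by (intro exI[of _ e]) (auto simp: dist_real_def abs_minus_commute)
qed auto

lemma truncated_level_set_lmeasurable:
  assumes "toppling_function T tau"
  shows "{s\<in>{0..tau}. T s = x \<and> s \<le> t} \<in> lmeasurable"
proof (rule bounded_set_imp_lmeasurable)
  have "{s\<in>{0..tau}. T s = x \<and> s \<le> t} = {s\<in>{0..tau}. T s = x} \<inter> {..t}" by auto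
  then show "{s\<in>{0..tau}. T s = x \<and> s \<le> t} \<in> sets lebesgue"
    using level_set_measurable[OF assms] by (metis sets.Int atMost_borel sets_lborel sets_completionI_sets)
qed (rule bounded_subset[of "{0..tau}"], auto)

lemma odometer_final:
  "odometer T tau tau x = measure lebesgue {s\<in>{0..tau}. T s = x}"
  unfolding odometer_def by (rule arg_cong[where f = "measure lebesgue"]) auto

lemma odometer_nonneg: "odometer T tau t x \<ge> 0"
  by (simp add: odometer_def)

lemma odometer_zero:
  assumes "toppling_function T tau"
  shows "odometer T tau 0 x = 0"
proof -
  have "odometer T tau 0 x \<le> measure lebesgue {0::real}"
    unfolding odometer_def using truncated_level_set_lmeasurable[OF assms]
    by (intro measure_mono_fmeasurable) (auto intro: bounded_set_imp_lmeasurable)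
  then show ?thesis using odometer_nonneg[of T tau 0 x] by simp
qed

lemma odometer_lipschitz:
  assumes tf: "toppling_function T tau" and "t \<le> t'"
  shows "odometer T tau t' x \<le> odometer T tau t x + (t' - t)"
proof -
  let ?A = "{s\<in>{0..tau}. T s = x \<and> s \<le> t}"
  have lA: "?A \<in> lmeasurable" using truncated_level_set_lmeasurable[OF tf] .
  have lI: "{t<..t'} \<in> lmeasurable" by (rule bounded_set_imp_lmeasurable) auto
  have "odometer T tau t' x \<le> measure lebesgue (?A \<union> {t<..t'})"
    unfolding odometer_def using truncated_level_set_lmeasurable[OF tf] lA lI
    by (intro measure_mono_fmeasurable fmeasurable.Un) auto
  also have "\<dots> \<le> measure lebesgue ?A + measure lebesgue {t<..t'}"
    using lA by (intro measure_Un_le) auto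
  finally show ?thesis using assms(2) by (simp add: odometer_def)
qed

lemma odometer_exceeds_earlier:
  assumes tf: "toppling_function T tau" and "0 \<le> t'" and exc: "odometer T tau t' x > u"
    and "u \<ge> 0"
  shows "\<exists>t. 0 \<le> t \<and> t < t' \<and> odometer T tau t x > u"
proof -
  have "t' \<noteq> 0" using exc \<open>u \<ge> 0\<close> odometer_zero[OF tf] by auto
  define t where "t = max 0 (t' - (odometer T tau t' x - u) / 2)"
  have "0 \<le> t" "t < t'" using \<open>0 \<le> t'\<close> \<open>t' \<noteq> 0\<close> exc by (auto simp: t_def)
  moreover have "odometer T tau t' x \<le> odometer T tau t x + (t' - t)"
    using odometer_lipschitz[OF tf] \<open>t < t'\<close> by simp
  moreover have "t' - t < odometer T tau t' x - u" using exc \<open>0 \<le> t'\<close> by (auto simp: t_def max_def)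
  ultimately show ?thesis by (intro exI[of _ t]) simp
qed

lemma odometer_frozen:
  assumes "t \<le> t'" and const: "\<And>r. t < r \<Longrightarrow> r \<le> t' \<Longrightarrow> T r = y" and "x \<noteq> y"
  shows "odometer T tau t' x = odometer T tau t x"
proof -
  have "s \<le> t" if "T s = x" "s \<le> t'" for s
    using const[of s] that \<open>x \<noteq> y\<close> by force
  then have "{s\<in>{0..tau}. T s = x \<and> s \<le> t'} = {s\<in>{0..tau}. T s = x \<and> s \<le> t}"
    using \<open>t \<le> t'\<close> by auto
  then show ?thesis by (simp add: odometer_def)
qed

text \<open>A toppling function is constant on a short interval to the right of every t < tau,
  since its discontinuities in [0,t'] are finitely many for t < t' < tau.\<close>
lemma constant_after:
  assumes tf: "toppling_function T tau" and "0 \<le> t" "t < tau"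
  obtains eps where "eps > 0" "t + eps \<le> tau"
    "\<And>r s. r \<in> {t<..<t+eps} \<Longrightarrow> s \<in> {t<..<t+eps} \<Longrightarrow> T r = T s"
proof -
  define t' where "t' = (t + tau) / 2"
  have t': "t < t'" "t' < tau" using \<open>t < tau\<close> by (auto simp: t'_def)
  define F where "F = {s\<in>{0..t'}. discont_at T tau s \<and> t < s}"
  have "finite {s\<in>{0..t'}. discont_at T tau s}"
    using tf t' \<open>0 \<le> t\<close> by (simp add: toppling_function_def)
  then have "finite F" unfolding F_def by (rule rev_finite_subset) auto
  define eps where "eps = Min (insert (t' - t) ((\<lambda>s. s - t) ` F))"
  have eps_le: "eps \<le> d" if "d \<in> insert (t' - t) ((\<lambda>s. s - t) ` F)" for d
    unfolding eps_def using \<open>finite F\<close> that by (intro Min_le) auto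
  have "eps > 0" unfolding eps_def using \<open>finite F\<close> t' by (subst Min_gr_iff) (auto simp: F_def)
  have "eps \<le> t' - t" using eps_le by simp
  have continuous: "\<not> discont_at T tau r" if r: "r \<in> {t<..<t+eps}" for r
  proof
    assume "discont_at T tau r"
    then have "r \<in> F" using r \<open>eps \<le> t' - t\<close> \<open>0 \<le> t\<close> by (auto simp: F_def)
    then have "eps \<le> r - t" using eps_le by simp
    then show False using r by simp
  qed
  have "T r = T s" if "r \<in> {t<..<t+eps}" "s \<in> {t<..<t+eps}" for r s
  proof (rule connected_local_const[where A = "{t<..<t+eps}"])
    show "\<forall>a\<in>{t<..<t+eps}. \<forall>\<^sub>F b in at a within {t<..<t+eps}. T a = T b"
    proof
      fix a assume a: "a \<in> {t<..<t+eps}"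
      then obtain d where "d > 0" "\<forall>r\<in>{0..tau}. \<bar>r - a\<bar> < d \<longrightarrow> T r = T a"
        using continuous unfolding discont_at_def by blast
      then show "\<forall>\<^sub>F b in at a within {t<..<t+eps}. T a = T b"
        unfolding eventually_at using \<open>eps \<le> t' - t\<close> t' \<open>0 \<le> t\<close>
        by (intro exI[of _ d]) (auto simp: dist_real_def)
    qed
  qed (use that in auto)
  moreover have "t + eps \<le> tau" using \<open>eps \<le> t' - t\<close> t' by simp
  ultimately show ?thesis using \<open>eps > 0\<close> that by blast
qed

text \<open>Comparison of Laplacians: if f <= g away from y but f y > g y, then the Laplacian
  of f at y is strictly smaller (y is not its own neighbour).\<close>
lemma dlaplacian_strict_compare:
  fixes f g :: "int ^ 'd::finite \<Rightarrow> real"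
  assumes le: "\<And>w. w \<noteq> y \<Longrightarrow> f w \<le> g w" and gt: "f y > g y"
  shows "dlaplacian f y < dlaplacian g y"
proof -
  have "w \<noteq> y" if "nbr y w" for w
    using that by (auto simp: nbr_def)
  then have "(\<Sum>w\<in>{w. nbr y w}. f w) \<le> (\<Sum>w\<in>{w. nbr y w}. g w)"
    using le by (intro sum_mono) auto
  then have "(1 / (2 * real CARD('d))) * (\<Sum>w\<in>{w. nbr y w}. f w)
             \<le> (1 / (2 * real CARD('d))) * (\<Sum>w\<in>{w. nbr y w}. g w)"
    by (intro mult_left_mono) auto
  then show ?thesis using gt by (simp add: dlaplacian_def)
qed

lemma least_action:
  fixes nu0 U :: "int ^ 'd::finite \<Rightarrow> real"
  assumes tf: "toppling_function T tau" and lg: "legal nu0 T tau"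
    and stable: "\<And>x. nu0 x + dlaplacian U x \<le> 1" and nonneg: "\<And>x. U x \<ge> 0"
  shows "odometer T tau tau x \<le> U x"
proof (rule ccontr)
  assume "\<not> odometer T tau tau x \<le> U x"
  define E where "E = {t\<in>{0..tau}. \<exists>z. odometer T tau t z > U z}"
  have "tau \<in> E"
    using \<open>\<not> _\<close> tf unfolding E_def toppling_function_def by (auto simp: not_le)
  have bdd: "bdd_below E" unfolding E_def by (rule bdd_belowI[of _ 0]) auto
  define t0 where "t0 = Inf E"
  have t0_le: "t0 \<le> e" if "e \<in> E" for e using cInf_lower[OF that bdd] by (simp add: t0_def)
  have "0 \<le> t0" unfolding t0_def using \<open>tau \<in> E\<close> by (intro cInf_greatest) (auto simp: E_def)
  have below: "odometer T tau t0 z \<le> U z" for z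
  proof (rule ccontr)
    assume "\<not> odometer T tau t0 z \<le> U z"
    then obtain t where "0 \<le> t" "t < t0" "odometer T tau t z > U z"
      using odometer_exceeds_earlier[OF tf \<open>0 \<le> t0\<close>, where x = z and u = "U z"] nonneg by auto
    then have "t \<in> E" using t0_le[OF \<open>tau \<in> E\<close>] by (auto simp: E_def)
    then show False using t0_le[of t] \<open>t < t0\<close> by simp
  qed
  then have "t0 \<notin> E" by (auto simp: E_def not_less)
  then have "t0 < tau" using t0_le[OF \<open>tau \<in> E\<close>] \<open>tau \<in> E\<close> by (cases "t0 = tau") auto
  then obtain eps where "eps > 0" "t0 + eps \<le> tau"
    and const: "\<And>r s. r \<in> {t0<..<t0+eps} \<Longrightarrow> s \<in> {t0<..<t0+eps} \<Longrightarrow> T r = T s"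
    using constant_after[OF tf \<open>0 \<le> t0\<close>] by blast
  obtain e where "e \<in> E" "e < t0 + eps"
    using cInf_less_iff[of E "t0 + eps"] \<open>tau \<in> E\<close> bdd \<open>eps > 0\<close> by (auto simp: t0_def)
  have "t0 < e" using t0_le[OF \<open>e \<in> E\<close>] \<open>t0 \<notin> E\<close> \<open>e \<in> E\<close> by (cases "e = t0") auto
  text \<open>Between t0 and e only the site y = T e topples, so only y can exceed U at time e.\<close>
  define y where "y = T e"
  have "T r = y" if "t0 < r" "r \<le> e" for r
    using const[of r e] that \<open>t0 < e\<close> \<open>e < t0 + eps\<close> by (simp add: y_def)
  then have other: "odometer T tau e w \<le> U w" if "w \<noteq> y" for w
    using odometer_frozen[of t0 e T y w tau] \<open>t0 < e\<close> that below[of w] by simp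
  obtain z where z: "odometer T tau e z > U z" using \<open>e \<in> E\<close> by (auto simp: E_def)
  then have "z = y" using other[of z] by force
  then have exceeds: "odometer T tau e y > U y" using z by simp
  have "1 \<le> mass nu0 T tau e y"
    using lg \<open>e \<in> E\<close> by (auto simp: legal_def E_def y_def)
  also have "\<dots> < nu0 y + dlaplacian U y"
    using dlaplacian_strict_compare[where f = "odometer T tau e", OF other exceeds] by (simp add: mass_def)
  also have "\<dots> \<le> 1" using stable .
  finally show False by simp
qed

text \<open>The final odometer of a complete toppling is admissible in the least action
  principle, so it is dominated by every other legal toppling's final odometer.\<close>
lemma complete_odometer_le:
  assumes "toppling_function T1 tau1" "legal nu0 T1 tau1" "complete_toppling nu0 T2 tau2"
  shows "odometer T1 tau1 tau1 x \<le> odometer T2 tau2 tau2 x"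
proof (rule least_action[of T1 tau1 nu0])
  show "nu0 y + dlaplacian (odometer T2 tau2 tau2) y \<le> 1" for y
    using assms(3) by (simp add: complete_toppling_def mass_def)
qed (simp_all add: assms(1,2) odometer_nonneg)

text \<open>The level sets partition [0,tau], so their measures add up to tau.\<close>
lemma total_time:
  fixes T :: "real \<Rightarrow> int ^ 'd::finite"
  assumes tf: "toppling_function T tau"
  shows "ennreal tau = (\<integral>\<^sup>+x. ennreal (measure lebesgue {s\<in>{0..tau}. T s = x}) \<partial>count_space UNIV)"
proof -
  have "emeasure lebesgue {s\<in>{0..tau}. T s = x} = measure lebesgue {s\<in>{0..tau}. T s = x}" for x
    using truncated_level_set_lmeasurable[OF tf, of x tau]
    by (intro emeasure_eq_measure2) (auto simp: conj_commute cong: conj_cong)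
  moreover have "emeasure lebesgue (\<Union>x. {s\<in>{0..tau}. T s = x})
      = (\<integral>\<^sup>+x. emeasure lebesgue {s\<in>{0..tau}. T s = x} \<partial>count_space UNIV)"
    using level_set_measurable[OF tf]
    by (intro emeasure_UN_countable) (auto simp: disjoint_family_on_def)
  moreover have "(\<Union>x. {s\<in>{0..tau}. T s = x}) = {0..tau}" by auto
  ultimately show ?thesis using tf by (simp add: toppling_function_def)
qed

theorem mainTheorem13:
  fixes nu0 :: "int ^ 'd::finite \<Rightarrow> real"
    and T1 T2 :: "real \<Rightarrow> int ^ 'd"
    and tau1 tau2 :: real
  assumes "toppling_function T1 tau1" and "toppling_function T2 tau2"
    and "complete_toppling nu0 T1 tau1" and "complete_toppling nu0 T2 tau2"
  shows "(\<forall>x. measure lebesgue {s\<in>{0..tau1}. T1 s = x} = measure lebesgue {s\<in>{0..tau2}. T2 s = x})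
         \<and> tau1 = tau2
         \<and> mass nu0 T1 tau1 tau1 = mass nu0 T2 tau2 tau2"
proof -
  have odometers: "odometer T1 tau1 tau1 = odometer T2 tau2 tau2"
    using assms complete_odometer_le[of T1 tau1 nu0 T2 tau2] complete_odometer_le[of T2 tau2 nu0 T1 tau1]
    by (intro ext antisym) (auto simp: complete_toppling_def)
  then have levels: "\<forall>x. measure lebesgue {s\<in>{0..tau1}. T1 s = x} = measure lebesgue {s\<in>{0..tau2}. T2 s = x}"
    by (simp add: odometer_final fun_eq_iff)
  then have "ennreal tau1 = ennreal tau2"
    using total_time[OF assms(1)] total_time[OF assms(2)] by simp
  then have "tau1 = tau2" using assms(1,2) by (simp add: toppling_function_def)
  moreover have "mass nu0 T1 tau1 tau1 = mass nu0 T2 tau2 tau2"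
    unfolding mass_def odometers ..
  ultimately show ?thesis using levels by blast
qed

end
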